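(* Assume (A) or (B), with $\alpha=a$ in case (A) and $\alpha=b$ in case (B). For every $1\le r<\infty$ there is $C>0$ depending only on $\alpha,r,n$ such that $$\|\Gamma(x,\cdot,t)\|_{L^{r,1}(w)}\le C\,t^{-\frac{n+\alpha}{2}\left(1-\frac1r\right)}\quad\text{for all }x\in\mathbb{R}^n,\ t>0.$$
   Context: (A): $w(x)=|x_1|^a$ on $\mathbb{R}^n$ with $a\in[0,1)$; (B): $w(x)=|x|^b$ with $b\in[0,n)$. $\Gamma$ is the fundamental solution of $\partial_t v-w^{-1}\operatorname{div}(w\nabla v)=0$ with pole at $(y,0)$, assumed to satisfy (K1) $\int\Gamma(x,y,t)w(x)dx=\int\Gamma(x,y,t)w(y)dy=1$; (K2) $\Gamma(x,y,t)=\int\Gamma(x,\xi,t-s)\Gamma(\xi,y,s)w(\xi)d\xi$ for $t>s>0$; (K3) $c_*e^{-|x-y|^2/(c_*t)}\le \sqrt{w(B(x,\sqrt t))w(B(y,\sqrt t))}\,\Gamma(x,y,t)\le C_*e^{-|x-y|^2/(C_*t)}$ with $c_*,C_*>0$ depending on $n,\alpha$, where $w(E)=\int_E w$. $\mu_f(\lambda)=w(\{|f|>\lambda\})$, $f^*(s)=\inf\{\lambda>0:\mu_f(\lambda)\le s\}$, and $\|f\|_{L^{r,1}(w)}=\int_0^\infty s^{1/r-1}f^*(s)\,ds$. *)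

theory Defs
  imports "HOL-Analysis.Analysis"
begin

text \<open>Points of R^n are vectors real^'n, n = CARD('n). The coordinate x_1 is x $ i1
  for a designated index i1.\<close>

definition weightA :: "'n::finite \<Rightarrow> real \<Rightarrow> real^'n \<Rightarrow> real" where
  "weightA i1 a x = (if a = 0 then 1 else \<bar>x $ i1\<bar> powr a)"

definition weightB :: "real \<Rightarrow> real^'n::finite \<Rightarrow> real" where
  "weightB b x = (if b = 0 then 1 else norm x powr b)"

definition wmeasure :: "(real^'n::finite \<Rightarrow> real) \<Rightarrow> (real^'n) measure" where
  "wmeasure w = density lborel (\<lambda>x. ennreal (w x))"

definition wvol :: "(real^'n::finite \<Rightarrow> real) \<Rightarrow> (real^'n) set \<Rightarrow> real" where
  "wvol w E = measure (wmeasure w) E"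

definition distfun :: "(real^'n::finite \<Rightarrow> real) \<Rightarrow> (real^'n \<Rightarrow> real) \<Rightarrow> real \<Rightarrow> ennreal" where
  "distfun w f lam = emeasure (wmeasure w) {x. \<bar>f x\<bar> > lam}"

text \<open>decreasing rearrangement f*(s) = inf{lambda > 0 : mu_f(lambda) <= s} (infimum of the
  empty set is +infinity)\<close>
definition rearr :: "(real^'n::finite \<Rightarrow> real) \<Rightarrow> (real^'n \<Rightarrow> real) \<Rightarrow> real \<Rightarrow> ennreal" where
  "rearr w f s = (INF lam \<in> {lam::real. lam > 0 \<and> distfun w f lam \<le> ennreal s}. ennreal lam)"

definition lorentz_norm :: "(real^'n::finite \<Rightarrow> real) \<Rightarrow> real \<Rightarrow> (real^'n \<Rightarrow> real) \<Rightarrow> ennreal" where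
  "lorentz_norm w r f = (\<integral>\<^sup>+ s. indicator {0<..} s * ennreal (s powr (1/r - 1)) * rearr w f s \<partial>lborel)"

text \<open>Hypotheses (K1)-(K3) on Gamma(x,y,t), with constants cs = c_*, Cs = C_*.\<close>
definition heat_kernel_hyps ::
  "(real^'n::finite \<Rightarrow> real) \<Rightarrow> real \<Rightarrow> real \<Rightarrow> (real^'n \<Rightarrow> real^'n \<Rightarrow> real \<Rightarrow> real) \<Rightarrow> bool" where
  "heat_kernel_hyps w cs Cs G \<longleftrightarrow>
     (\<forall>x y t. t > 0 \<longrightarrow>
        (\<integral>z. G z y t \<partial>wmeasure w) = 1 \<and> (\<integral>z. G x z t \<partial>wmeasure w) = 1) \<and>
     (\<forall>x y t s. 0 < s \<and> s < t \<longrightarrow>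
        G x y t = (\<integral>\<xi>. G x \<xi> (t - s) * G \<xi> y s \<partial>wmeasure w)) \<and>
     (\<forall>x y t. t > 0 \<longrightarrow>
        cs * exp (- (dist x y)\<^sup>2 / (cs * t))
          \<le> sqrt (wvol w (ball x (sqrt t)) * wvol w (ball y (sqrt t))) * G x y t \<and>
        sqrt (wvol w (ball x (sqrt t)) * wvol w (ball y (sqrt t))) * G x y t
          \<le> Cs * exp (- (dist x y)\<^sup>2 / (Cs * t)))"

end

theory Submission
  imports Defs
begin

text \<open>Both weights satisfy \<open>|x\<^sub>i|\<^sup>\<alpha> \<le> w(x)\<close> for some coordinate \<open>i\<close>, and every ball of radius
  \<open>\<rho>\<close> contains a ball of radius \<open>\<rho>/4\<close> on which \<open>|x\<^sub>i| \<ge> \<rho>/4\<close>; hence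
  \<open>w(B(y,\<surd>t)) \<ge> c t\<^bsup>(n+\<alpha>)/2\<^esup>\<close> uniformly in \<open>y\<close>, and the upper bound in (K3) gives
  \<open>0 < \<Gamma>(x,\<cdot>,t) \<le> M := C t\<^bsup>-(n+\<alpha>)/2\<^esup>\<close>. By (K1) \<open>\<Gamma>(x,\<cdot>,t)\<close> has unit mass, so Markov's
  inequality gives \<open>f\<^sup>*(s) \<le> min(M, 1/s)\<close> for \<open>f = \<Gamma>(x,\<cdot>,t)\<close>, and for \<open>r > 1\<close> integrating
  \<open>s\<^bsup>1/r-1\<^esup> min(M, 1/s)\<close> yields a multiple of \<open>M\<^bsup>1-1/r\<^esup>\<close>. For \<open>r = 1\<close> that integral diverges;
  instead \<open>\<integral> f\<^sup>* = \<integral> |f| = 1\<close> by the layer cake formula.\<close>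

lemma weight_bounds:
  fixes w :: "real^'n::finite \<Rightarrow> real"
  assumes "(\<exists>i1. 0 \<le> \<alpha> \<and> \<alpha> < 1 \<and> w = weightA i1 \<alpha>) \<or> (0 \<le> \<alpha> \<and> \<alpha> < real CARD('n) \<and> w = weightB \<alpha>)"
  shows "\<exists>i. 0 \<le> \<alpha> \<and> (\<forall>x. \<bar>x$i\<bar> powr \<alpha> \<le> w x) \<and> (\<forall>x. w x \<le> (norm x + 1) powr \<alpha>)
           \<and> w \<in> borel_measurable borel"
  using assms
proof
  assume "\<exists>i1. 0 \<le> \<alpha> \<and> \<alpha> < 1 \<and> w = weightA i1 \<alpha>"
  then obtain i where a: "0 \<le> \<alpha>" and w: "w = weightA i \<alpha>" by auto
  have "\<bar>x$i\<bar> powr \<alpha> \<le> w x" for x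
    by (cases "\<alpha> = 0") (simp_all add: w weightA_def powr_def)
  moreover have "w x \<le> (norm x + 1) powr \<alpha>" for x
  proof (cases "\<alpha> = 0")
    case False
    have "\<bar>x$i\<bar> \<le> norm x + 1" using component_le_norm_cart[of x i] by linarith
    then show ?thesis using False a by (simp add: w weightA_def powr_mono2)
  qed (simp add: w weightA_def add_nonneg_pos[THEN less_imp_neq, THEN not_sym])
  moreover have "w \<in> borel_measurable borel" unfolding w weightA_def by measurable
  ultimately show ?thesis using a by blast
next
  assume "0 \<le> \<alpha> \<and> \<alpha> < real CARD('n) \<and> w = weightB \<alpha>"
  then have a: "0 \<le> \<alpha>" and w: "w = weightB \<alpha>" by auto
  have "\<bar>x$i\<bar> powr \<alpha> \<le> w x" for x i
    using a component_le_norm_cart[of x i]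
    by (cases "\<alpha> = 0") (simp_all add: w weightB_def powr_def powr_mono2)
  moreover have "w x \<le> (norm x + 1) powr \<alpha>" for x
    using a add_nonneg_pos[OF norm_ge_zero zero_less_one, of x]
    by (cases "\<alpha> = 0") (simp_all add: w weightB_def powr_mono2)
  moreover have "w \<in> borel_measurable borel" unfolding w weightB_def by measurable
  ultimately show ?thesis using a by blast
qed

lemma emeasure_wmeasure:
  assumes "w \<in> borel_measurable borel" "A \<in> sets lborel"
  shows "emeasure (wmeasure w) A = (\<integral>\<^sup>+x. ennreal (w x) * indicator A x \<partial>lborel)"
  unfolding wmeasure_def using assms by (simp add: emeasure_density)

lemma emeasure_wmeasure_ball_finite:
  fixes w :: "real^'n::finite \<Rightarrow> real" and \<alpha> :: real
  assumes a: "0 \<le> \<alpha>" and uw: "\<And>x. w x \<le> (norm x + 1) powr \<alpha>" and wm: "w \<in> borel_measurable borel"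
  shows "emeasure (wmeasure w) (ball y \<rho>) < \<infinity>"
proof -
  have "ennreal (w x) * indicator (ball y \<rho>) x
        \<le> ennreal ((norm y + \<rho> + 1) powr \<alpha>) * indicator (ball y \<rho>) x" for x
  proof (cases "x \<in> ball y \<rho>")
    case True
    then have "norm x \<le> norm y + \<rho>"
      using norm_triangle_ineq[of y "x - y"] by (auto simp: dist_norm norm_minus_commute)
    then have "(norm x + 1) powr \<alpha> \<le> (norm y + \<rho> + 1) powr \<alpha>" using a by (intro powr_mono2) auto
    then show ?thesis using True uw[of x] by (simp add: ennreal_leI)
  qed simp
  then have "emeasure (wmeasure w) (ball y \<rho>)
             \<le> (\<integral>\<^sup>+x. ennreal ((norm y + \<rho> + 1) powr \<alpha>) * indicator (ball y \<rho>) x \<partial>lborel)"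
    using wm by (simp add: emeasure_wmeasure nn_integral_mono)
  also have "\<dots> = ennreal ((norm y + \<rho> + 1) powr \<alpha>) * emeasure lborel (ball y \<rho>)"
    by (rule nn_integral_cmult_indicator) simp
  also have "\<dots> < \<infinity>" using emeasure_lborel_ball_finite[of y \<rho>] by (simp add: ennreal_mult_less_top)
  finally show ?thesis .
qed

lemma wvol_ball_ge:
  fixes w :: "real^'n::finite \<Rightarrow> real" and \<alpha> :: real
  assumes a: "0 \<le> \<alpha>" and lw: "\<And>x. \<bar>x$i\<bar> powr \<alpha> \<le> w x"
    and uw: "\<And>x. w x \<le> (norm x + 1) powr \<alpha>" and wm: "w \<in> borel_measurable borel" and rho: "\<rho> > 0"
  shows "(1/4) powr \<alpha> * (1/4)^CARD('n) * measure lborel (ball (0::real^'n) 1) * \<rho> powr (real CARD('n) + \<alpha>)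
         \<le> wvol w (ball y \<rho>)"
proof -
  define z where "z = y + (if y$i \<ge> 0 then \<rho>/2 else -\<rho>/2) *\<^sub>R axis i 1"
  have dist_zy: "dist z y = \<rho>/2" using rho by (simp add: z_def dist_norm)
  have sub: "ball z (\<rho>/4) \<subseteq> ball y \<rho>"
  proof
    fix x assume "x \<in> ball z (\<rho>/4)"
    then have "dist z x < \<rho>/4" by simp
    then show "x \<in> ball y \<rho>" using dist_zy dist_triangle[of y x z] rho by (simp add: dist_commute)
  qed
  have zi: "\<bar>z$i\<bar> \<ge> \<rho>/2" using rho by (auto simp: z_def axis_def)
  have lowb: "(\<rho>/4) powr \<alpha> \<le> w x" if "x \<in> ball z (\<rho>/4)" for x
  proof -
    have "\<bar>x$i - z$i\<bar> < \<rho>/4"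
      using component_le_norm_cart[of "x - z" i] that by (simp add: dist_norm norm_minus_commute)
    then have "\<rho>/4 \<le> \<bar>x$i\<bar>" using zi by linarith
    then have "(\<rho>/4) powr \<alpha> \<le> \<bar>x$i\<bar> powr \<alpha>" using a rho by (intro powr_mono2) auto
    then show ?thesis using lw[of x] by linarith
  qed
  have scale: "(\<rho>/4) powr \<alpha> * (\<rho>/4)^CARD('n) = (1/4) powr \<alpha> * (1/4)^CARD('n) * \<rho> powr (real CARD('n) + \<alpha>)"
    using rho by (simp add: powr_divide powr_realpow[symmetric] powr_add power_divide)
  have "ennreal ((\<rho>/4) powr \<alpha> * ((\<rho>/4)^CARD('n) * measure lborel (ball (0::real^'n) 1)))
        = (\<integral>\<^sup>+x. ennreal ((\<rho>/4) powr \<alpha>) * indicator (ball z (\<rho>/4)) x \<partial>lborel)"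
    using rho content_ball_conv_unit_ball[of "\<rho>/4" z] emeasure_lborel_ball_finite[of z "\<rho>/4"]
    by (subst nn_integral_cmult_indicator) (auto simp: emeasure_eq_ennreal_measure intro!: ennreal_mult)
  also have "\<dots> \<le> (\<integral>\<^sup>+x. ennreal (w x) * indicator (ball y \<rho>) x \<partial>lborel)"
    using lowb sub by (intro nn_integral_mono) (auto simp: indicator_def ennreal_leI)
  also have "\<dots> = emeasure (wmeasure w) (ball y \<rho>)"
    using wm by (simp add: emeasure_wmeasure)
  also have "\<dots> = ennreal (wvol w (ball y \<rho>))"
    using emeasure_wmeasure_ball_finite[OF a uw wm, of y \<rho>]
    by (simp add: wvol_def emeasure_eq_ennreal_measure less_top)
  finally have "(\<rho>/4) powr \<alpha> * (\<rho>/4)^CARD('n) * measure lborel (ball (0::real^'n) 1)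
                \<le> wvol w (ball y \<rho>)"
    by (simp add: ennreal_le_iff wvol_def mult.assoc)
  then show ?thesis
    unfolding scale by (simp add: ac_simps)
qed

lemma heat_kernel_bounds:
  assumes hk: "heat_kernel_hyps w cs Cs G" and cs: "cs > 0" and Cs: "Cs > 0" and t: "t > 0"
    and v: "v > 0" and lb: "\<And>y. v \<le> wvol w (ball y (sqrt t))"
  shows "0 < G x y t" "G x y t \<le> Cs / v"
proof -
  let ?P = "wvol w (ball x (sqrt t)) * wvol w (ball y (sqrt t))"
  have "v * v \<le> ?P" using lb[of x] lb[of y] v by (intro mult_mono) auto
  then have sP: "v \<le> sqrt ?P" using v by (metis real_le_rsqrt power2_eq_square less_eq_real_def)
  have K: "cs * exp (- (dist x y)\<^sup>2 / (cs * t)) \<le> sqrt ?P * G x y t"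
          "sqrt ?P * G x y t \<le> Cs * exp (- (dist x y)\<^sup>2 / (Cs * t))"
    using hk t unfolding heat_kernel_hyps_def by blast+
  have "0 < cs * exp (- (dist x y)\<^sup>2 / (cs * t))" using cs by simp
  then have "0 < sqrt ?P * G x y t" using K(1) by linarith
  moreover have "0 < sqrt ?P" using sP v by linarith
  ultimately show G0: "0 < G x y t" using zero_less_mult_pos by blast
  have "Cs * exp (- (dist x y)\<^sup>2 / (Cs * t)) \<le> Cs" using Cs t by simp
  moreover have "v * G x y t \<le> sqrt ?P * G x y t" using sP G0 by (intro mult_right_mono) auto
  ultimately have "v * G x y t \<le> Cs" using K(2) by linarith
  then show "G x y t \<le> Cs / v" using v by (simp add: field_simps)
qed

lemma rearr_le_bound:
  assumes "\<And>y. \<bar>f y\<bar> \<le> M" "M > 0" "s \<ge> 0"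
  shows "rearr w f s \<le> ennreal M"
  unfolding rearr_def
proof (rule INF_lower)
  have "{x. M < \<bar>f x\<bar>} = {}" using assms(1) by (auto simp: not_less)
  then show "M \<in> {lam. lam > 0 \<and> distfun w f lam \<le> ennreal s}" using assms by (simp add: distfun_def)
qed

lemma rearr_le_inverse:
  assumes fm: "f \<in> borel_measurable lborel"
    and I: "(\<integral>\<^sup>+y. ennreal \<bar>f y\<bar> \<partial>wmeasure w) \<le> 1" and s: "s > 0"
  shows "rearr w f s \<le> ennreal (1/s)"
  unfolding rearr_def
proof (rule INF_lower)
  have sets: "sets (wmeasure w) = sets lborel" by (simp add: wmeasure_def)
  have fm': "(\<lambda>y. ennreal \<bar>f y\<bar> * indicator UNIV y) \<in> borel_measurable (wmeasure w)"
    using fm by (simp add: measurable_cong_sets[OF sets refl])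
  have "distfun w f (1/s) \<le> emeasure (wmeasure w) {x\<in>UNIV. 1 \<le> ennreal s * ennreal \<bar>f x\<bar>}"
    unfolding distfun_def
  proof (rule emeasure_mono)
    show "{x. 1 / s < \<bar>f x\<bar>} \<subseteq> {x \<in> UNIV. 1 \<le> ennreal s * ennreal \<bar>f x\<bar>}"
      using s by (auto simp: field_simps ennreal_mult[symmetric] ennreal_ge_1)
    show "{x \<in> UNIV. 1 \<le> ennreal s * ennreal \<bar>f x\<bar>} \<in> sets (wmeasure w)"
      using fm unfolding sets by measurable
  qed
  also have "\<dots> \<le> ennreal s * (\<integral>\<^sup>+ x. ennreal \<bar>f x\<bar> * indicator UNIV x \<partial>wmeasure w)"
    using nn_integral_Markov_inequality[OF fm', of "ennreal s"] by (simp add: wmeasure_def)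
  also have "\<dots> \<le> ennreal s" using I by (simp add: mult_left_le)
  finally show "1/s \<in> {lam. lam > 0 \<and> distfun w f lam \<le> ennreal s}" using s by simp
qed

lemma nn_integral_powr_le_of_min_bound:
  fixes F :: "real \<Rightarrow> ennreal"
  assumes r: "1 < r" and M: "M > 0" and F1: "\<And>s. s > 0 \<Longrightarrow> F s \<le> ennreal M"
    and F2: "\<And>s. s > 0 \<Longrightarrow> F s \<le> ennreal (1/s)"
  shows "(\<integral>\<^sup>+ s. indicator {0<..} s * ennreal (s powr (1/r - 1)) * F s \<partial>lborel)
         \<le> ennreal ((r + r/(r-1)) * M powr (1 - 1/r))"
proof -
  define p where "p = 1/r"
  have p0: "0 < p" and p1: "p < 1" using r by (auto simp: p_def)
  have iM: "1/M > 0" using M by simp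
  have pw: "indicator {0<..} s * ennreal (s powr (p - 1)) * F s
      \<le> ennreal (M * s powr (p-1)) * indicator {0..1/M} s + ennreal (s powr (p-2)) * indicator {1/M..} s"
    for s
  proof (cases "s > 0")
    case s: True
    show ?thesis
    proof (cases "s \<le> 1/M")
      case True
      have "indicator {0<..} s * ennreal (s powr (p - 1)) * F s \<le> ennreal (s powr (p - 1)) * ennreal M"
        using F1[OF s] s by (simp add: mult_left_mono)
      also have "\<dots> = ennreal (M * s powr (p-1)) * indicator {0..1/M} s"
        using M True s by (simp add: ennreal_mult[symmetric] mult.commute)
      finally show ?thesis by (simp add: add_increasing2)
    next
      case False
      have "indicator {0<..} s * ennreal (s powr (p - 1)) * F s \<le> ennreal (s powr (p - 1)) * ennreal (1/s)"
        using F2[OF s] s by (simp add: mult_left_mono)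
      also have "\<dots> = ennreal (s powr (p-2)) * indicator {1/M..} s"
        using s False powr_diff[of s "p-1" 1] by (simp add: ennreal_mult[symmetric])
      finally show ?thesis by (simp add: add_increasing)
    qed
  qed simp
  have I1: "((\<lambda>s. M * s powr (p-1)) has_integral M * ((1/M) powr p / p)) {0..1/M}"
    using has_integral_powr_from_0[of "p-1" "1/M"] p0 iM by (intro has_integral_mult_right) simp
  have I2: "((\<lambda>s. s powr (p-2)) has_integral -((1/M) powr (p-1)) / (p-1)) {1/M..}"
    using has_integral_powr_to_inf[of "p-2" "1/M"] p1 iM by simp
  have "(\<integral>\<^sup>+ s. indicator {0<..} s * ennreal (s powr (1/r - 1)) * F s \<partial>lborel)
     \<le> (\<integral>\<^sup>+ s. ennreal (M * s powr (p-1)) * indicator {0..1/M} s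
              + ennreal (s powr (p-2)) * indicator {1/M..} s \<partial>lborel)"
    using pw unfolding p_def by (intro nn_integral_mono) auto
  also have "\<dots> = (\<integral>\<^sup>+ s. ennreal (M * s powr (p-1)) * indicator {0..1/M} s \<partial>lborel)
                 + (\<integral>\<^sup>+ s. ennreal (s powr (p-2)) * indicator {1/M..} s \<partial>lborel)"
    by (intro nn_integral_add) auto
  also have "\<dots> = ennreal (M * ((1/M) powr p / p)) + ennreal (-((1/M) powr (p-1)) / (p-1))"
    using M by (simp add: nn_integral_has_integral_lebesgue'[OF _ I1] nn_integral_has_integral_lebesgue'[OF _ I2])
  also have "\<dots> = ennreal (M * ((1/M) powr p / p) + (-((1/M) powr (p-1)) / (p-1)))"
    using M p0 p1 by (intro ennreal_plus[symmetric]) (auto simp: divide_nonneg_neg)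
  also have "M * ((1/M) powr p / p) + (-((1/M) powr (p-1)) / (p-1)) = (r + r/(r-1)) * M powr (1 - 1/r)"
  proof -
    have "M * (1/M) powr p = M powr (1-p)" "(1/M) powr (p-1) = M powr (1-p)"
      using M by (simp_all add: powr_divide powr_diff powr_minus_divide)
    then have "M * ((1/M) powr p / p) + (-((1/M) powr (p-1)) / (p-1))
               = M powr (1-p) * (1/p) + M powr (1-p) * (-1/(p-1))"
      by (simp add: field_simps)
    moreover have c: "1/p = r" "-1/(p-1) = r/(r-1)" using r by (auto simp: p_def field_simps)
    ultimately show ?thesis unfolding c by (simp add: p_def algebra_simps)
  qed
  finally show ?thesis .
qed

lemma emeasure_lborel_pos_below:
  "emeasure lborel {s::real. 0 < s \<and> ennreal s < m} = m"
proof (cases m rule: ennreal_cases)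
  case (real r)
  then have "{s::real. 0 < s \<and> ennreal s < m} = {0<..<r}" by (auto simp: ennreal_less_iff)
  then show ?thesis using real by simp
next
  case top
  then have "{s::real. 0 < s \<and> ennreal s < m} = {0<..}" by auto
  moreover have "emeasure lborel {0::real<..} = \<infinity>"
  proof (rule ccontr)
    assume "emeasure lborel {0::real<..} \<noteq> \<infinity>"
    then obtain E where E: "emeasure lborel {0::real<..} = ennreal E" "0 \<le> E"
      by (cases "emeasure lborel {0::real<..}" rule: ennreal_cases) auto
    have "emeasure lborel {0<..<E+1} \<le> emeasure lborel {0::real<..}" by (intro emeasure_mono) auto
    then show False using E by (simp add: ennreal_le_iff)
  qed
  ultimately show ?thesis using top by simp
qed

lemma nn_integral_emeasure_superlevel:
  fixes \<mu> :: "real \<Rightarrow> ennreal"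
  assumes [measurable]: "\<mu> \<in> borel_measurable lborel"
  shows "(\<integral>\<^sup>+ s. indicator {0<..} s * emeasure lborel {l. 0 < l \<and> ennreal s < \<mu> l} \<partial>lborel)
         = (\<integral>\<^sup>+ l. indicator {0<..} l * \<mu> l \<partial>lborel)"
proof -
  define g where "g s l = (if 0 < s \<and> 0 < l \<and> ennreal s < \<mu> l then 1 else 0 :: ennreal)" for s l :: real
  have g_meas: "case_prod g \<in> borel_measurable (lborel \<Otimes>\<^sub>M lborel)"
    unfolding g_def by measurable
  have "indicator {0<..} s * emeasure lborel {l. 0 < l \<and> ennreal s < \<mu> l} = (\<integral>\<^sup>+ l. g s l \<partial>lborel)"
    for s :: real
  proof -
    have "(\<integral>\<^sup>+ l. g s l \<partial>lborel)
          = (\<integral>\<^sup>+ l. indicator {0<..} s * indicator {l. 0 < l \<and> ennreal s < \<mu> l} l \<partial>lborel)"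
      by (intro nn_integral_cong) (simp add: g_def indicator_def)
    then show ?thesis by (simp add: nn_integral_cmult)
  qed
  moreover have "indicator {0<..} l * \<mu> l = (\<integral>\<^sup>+ s. g s l \<partial>lborel)" for l :: real
  proof -
    have "(\<integral>\<^sup>+ s. g s l \<partial>lborel)
          = (\<integral>\<^sup>+ s. indicator {0<..} l * indicator {s. 0 < s \<and> ennreal s < \<mu> l} s \<partial>lborel)"
      by (intro nn_integral_cong) (auto simp: g_def indicator_def)
    then show ?thesis by (simp add: nn_integral_cmult emeasure_lborel_pos_below)
  qed
  ultimately show ?thesis
    using lborel_pair.Fubini'[OF g_meas] by simp
qed

lemma distfun_eq_nn_integral:
  assumes [measurable]: "f \<in> borel_measurable lborel" "w \<in> borel_measurable borel"
  shows "distfun w f l = (\<integral>\<^sup>+x. (if l < \<bar>f x\<bar> then ennreal (w x) else 0) \<partial>lborel)"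
  unfolding distfun_def
  by (subst emeasure_wmeasure) (auto intro!: nn_integral_cong simp: indicator_def)

lemma borel_measurable_distfun [measurable]:
  assumes [measurable]: "f \<in> borel_measurable lborel" "w \<in> borel_measurable borel"
  shows "distfun w f \<in> borel_measurable lborel"
proof -
  have [measurable]: "w \<in> borel_measurable lborel" by simp
  show ?thesis unfolding distfun_eq_nn_integral[OF assms, abs_def] by measurable
qed

lemma distfun_antimono:
  assumes "f \<in> borel_measurable lborel" "w \<in> borel_measurable borel" "l \<le> l'"
  shows "distfun w f l' \<le> distfun w f l"
  unfolding distfun_eq_nn_integral[OF assms(1,2)] using assms(3) by (intro nn_integral_mono) auto

lemma nn_integral_distfun:
  assumes [measurable]: "f \<in> borel_measurable lborel" "w \<in> borel_measurable borel"
  shows "(\<integral>\<^sup>+ l. indicator {0<..} l * distfun w f l \<partial>lborel) = (\<integral>\<^sup>+ x. ennreal \<bar>f x\<bar> \<partial>wmeasure w)"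
proof -
  have [measurable]: "w \<in> borel_measurable lborel" by simp
  define h where "h l x = (if 0 < l \<and> l < \<bar>f x\<bar> then ennreal (w x) else 0)" for l :: real and x :: "real^'a"
  have h_meas: "case_prod h \<in> borel_measurable (lborel \<Otimes>\<^sub>M lborel)"
    unfolding h_def by measurable
  have "indicator {0<..} l * distfun w f l = (\<integral>\<^sup>+ x. h l x \<partial>lborel)" for l
    unfolding distfun_eq_nn_integral[OF assms] h_def
    by (cases "0 < l") (simp_all add: nn_integral_cmult)
  moreover have "(\<integral>\<^sup>+ l. h l x \<partial>lborel) = ennreal (w x) * ennreal \<bar>f x\<bar>" for x
  proof -
    have "(\<integral>\<^sup>+ l. h l x \<partial>lborel) = (\<integral>\<^sup>+ l. ennreal (w x) * indicator {0<..<\<bar>f x\<bar>} l \<partial>lborel)"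
      by (intro nn_integral_cong) (auto simp: h_def indicator_def)
    then show ?thesis by (subst (asm) nn_integral_cmult_indicator) auto
  qed
  ultimately show ?thesis
    using lborel_pair.Fubini'[OF h_meas]
    by (simp add: wmeasure_def nn_integral_density)
qed

lemma rearr_le_emeasure_superlevel:
  assumes fm: "f \<in> borel_measurable lborel" and wm: "w \<in> borel_measurable borel"
  shows "rearr w f s \<le> emeasure lborel {l. 0 < l \<and> ennreal s < distfun w f l}"
    (is "_ \<le> emeasure lborel ?S")
proof (rule ennreal_le_epsilon)
  fix e :: real assume "emeasure lborel ?S < top" and e: "0 < e"
  then obtain E where E: "emeasure lborel ?S = ennreal E" "0 \<le> E"
    by (cases "emeasure lborel ?S" rule: ennreal_cases) auto
  have S_meas: "?S \<in> sets lborel" using fm wm by measurable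
  \<comment> \<open>\<open>?S\<close> is an initial segment of \<open>(0,\<infinity>)\<close> of measure \<open>E\<close>, so it cannot contain \<open>(0, E + e]\<close>.\<close>
  have "\<not> ennreal s < distfun w f (E + e)"
  proof
    assume "ennreal s < distfun w f (E + e)"
    then have "{0<..E + e} \<subseteq> ?S" using distfun_antimono[OF fm wm] by (auto intro: less_le_trans)
    then have "emeasure lborel {0<..E + e} \<le> emeasure lborel ?S" using S_meas by (rule emeasure_mono)
    then show False using E e by (simp add: ennreal_le_iff)
  qed
  then have "E + e \<in> {lam. lam > 0 \<and> distfun w f lam \<le> ennreal s}" using E e by (simp add: not_less)
  then have "rearr w f s \<le> ennreal (E + e)" unfolding rearr_def by (rule INF_lower)
  then show "rearr w f s \<le> emeasure lborel ?S + ennreal e" using E e by (simp add: ennreal_plus)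
qed

lemma lorentz_norm_1_le:
  assumes fm: "f \<in> borel_measurable lborel" and wm: "w \<in> borel_measurable borel"
  shows "lorentz_norm w 1 f \<le> (\<integral>\<^sup>+ x. ennreal \<bar>f x\<bar> \<partial>wmeasure w)"
proof -
  have "lorentz_norm w 1 f = (\<integral>\<^sup>+ s. indicator {0<..} s * rearr w f s \<partial>lborel)"
    unfolding lorentz_norm_def by (intro nn_integral_cong) (auto simp: indicator_def)
  also have "\<dots> \<le> (\<integral>\<^sup>+ s. indicator {0<..} s * emeasure lborel {l. 0 < l \<and> ennreal s < distfun w f l} \<partial>lborel)"
    using rearr_le_emeasure_superlevel[OF fm wm] by (intro nn_integral_mono mult_left_mono) auto
  also have "\<dots> = (\<integral>\<^sup>+ x. ennreal \<bar>f x\<bar> \<partial>wmeasure w)"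
    using fm wm by (simp add: nn_integral_emeasure_superlevel nn_integral_distfun)
  finally show ?thesis .
qed

lemma lorentz_norm_le_of_bounded:
  assumes r: "1 \<le> r" and fm: "f \<in> borel_measurable lborel" and wm: "w \<in> borel_measurable borel"
    and I: "(\<integral>\<^sup>+y. ennreal \<bar>f y\<bar> \<partial>wmeasure w) \<le> 1" and M: "M > 0" and fM: "\<And>y. \<bar>f y\<bar> \<le> M"
  shows "lorentz_norm w r f \<le> ennreal ((if r = 1 then 1 else r + r/(r-1)) * M powr (1 - 1/r))"
proof (cases "r = 1")
  case True
  then show ?thesis using lorentz_norm_1_le[OF fm wm] I M by simp
next
  case False
  then have "1 < r" using r by simp
  then show ?thesis
    unfolding lorentz_norm_def using False
    by (simp, intro nn_integral_powr_le_of_min_bound M)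
       (auto intro: rearr_le_bound[OF fM M] rearr_le_inverse[OF fm I])
qed

lemma nn_integral_abs_eq_one:
  fixes f :: "'a \<Rightarrow> real"
  assumes int: "(\<integral>x. f x \<partial>M) = 1" and nonneg: "\<And>x. 0 \<le> f x"
  shows "f \<in> borel_measurable M" "(\<integral>\<^sup>+x. ennreal \<bar>f x\<bar> \<partial>M) = 1"
proof -
  have intg: "integrable M f" using int not_integrable_integral_eq by fastforce
  then show "f \<in> borel_measurable M" by (rule borel_measurable_integrable)
  have "(\<integral>\<^sup>+x. ennreal \<bar>f x\<bar> \<partial>M) = ennreal (\<integral>x. f x \<partial>M)"
    using intg nonneg by (simp add: nn_integral_eq_integral)
  then show "(\<integral>\<^sup>+x. ennreal \<bar>f x\<bar> \<partial>M) = 1" using int by simp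
qed

lemma lorentz_norm_heat_kernel_le:
  fixes w :: "real^'n::finite \<Rightarrow> real" and \<alpha> :: real
  assumes r: "1 \<le> r"
    and wc: "(\<exists>i1. 0 \<le> \<alpha> \<and> \<alpha> < 1 \<and> w = weightA i1 \<alpha>) \<or> (0 \<le> \<alpha> \<and> \<alpha> < real CARD('n) \<and> w = weightB \<alpha>)"
    and hk: "heat_kernel_hyps w cs Cs G" and cs: "cs > 0" and Cs: "Cs > 0" and t: "t > 0"
  defines "c0 \<equiv> (1/4) powr \<alpha> * (1/4)^CARD('n) * measure lborel (ball (0::real^'n) 1)"
  shows "lorentz_norm w r (\<lambda>y. G x y t)
         \<le> ennreal ((if r = 1 then 1 else r + r/(r-1)) * (Cs / c0) powr (1 - 1/r)
                    * t powr (- ((real CARD('n) + \<alpha>) / 2) * (1 - 1 / r)))"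
proof -
  obtain i where a: "0 \<le> \<alpha>" and lw: "\<And>x. \<bar>x$i\<bar> powr \<alpha> \<le> w x"
    and uw: "\<And>x. w x \<le> (norm x + 1) powr \<alpha>" and wm: "w \<in> borel_measurable borel"
    using weight_bounds[OF wc] by blast
  have c0: "c0 > 0" unfolding c0_def using content_ball_pos[of 1 "0::real^'n"] by simp
  define v where "v = c0 * t powr ((real CARD('n) + \<alpha>) / 2)"
  have v: "v > 0" using c0 t by (simp add: v_def)
  have "v \<le> wvol w (ball y (sqrt t))" for y
    using wvol_ball_ge[OF a lw uw wm, of "sqrt t" y] t
    by (simp add: v_def c0_def powr_half_sqrt[symmetric] powr_powr)
  then have G: "0 < G x y t" "G x y t \<le> Cs / v" for y
    using heat_kernel_bounds[OF hk cs Cs t v] by auto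
  have "(\<integral>y. G x y t \<partial>wmeasure w) = 1" using hk t unfolding heat_kernel_hyps_def by blast
  from nn_integral_abs_eq_one[OF this] G(1) have
    fm: "(\<lambda>y. G x y t) \<in> borel_measurable lborel" and I: "(\<integral>\<^sup>+y. ennreal \<bar>G x y t\<bar> \<partial>wmeasure w) = 1"
    by (auto simp: less_imp_le wmeasure_def cong: measurable_cong_sets)
  have "lorentz_norm w r (\<lambda>y. G x y t)
        \<le> ennreal ((if r = 1 then 1 else r + r/(r-1)) * (Cs / v) powr (1 - 1/r))"
    using G Cs v by (intro lorentz_norm_le_of_bounded[OF r fm wm I[THEN eq_refl]]) (auto simp: less_imp_le)
  also have "(Cs / v) powr (1 - 1/r)
             = (Cs / c0) powr (1 - 1/r) * t powr (- ((real CARD('n) + \<alpha>) / 2) * (1 - 1 / r))"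
    using Cs c0 t by (simp add: v_def powr_divide powr_mult powr_powr powr_minus_divide)
  finally show ?thesis by (simp add: mult.assoc)
qed

theorem lemma2p2:
  fixes \<alpha> r :: real
  assumes "1 \<le> r"
  shows "\<forall>cs Cs. cs > 0 \<and> Cs > 0 \<longrightarrow>
    (\<exists>C>0. \<forall>(w :: real^'n::finite \<Rightarrow> real) (G :: real^'n \<Rightarrow> real^'n \<Rightarrow> real \<Rightarrow> real).
       ((\<exists>i1. 0 \<le> \<alpha> \<and> \<alpha> < 1 \<and> w = weightA i1 \<alpha>) \<or>
        (0 \<le> \<alpha> \<and> \<alpha> < real CARD('n) \<and> w = weightB \<alpha>)) \<longrightarrow>
       heat_kernel_hyps w cs Cs G \<longrightarrow>
       (\<forall>x t. t > 0 \<longrightarrow>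
          lorentz_norm w r (\<lambda>y. G x y t)
            \<le> ennreal (C * t powr (- ((real CARD('n) + \<alpha>) / 2) * (1 - 1 / r)))))"
proof (intro allI impI)
  fix cs Cs :: real assume "cs > 0 \<and> Cs > 0"
  then have cs: "cs > 0" and Cs: "Cs > 0" by auto
  define c0 where "c0 = (1/4) powr \<alpha> * (1/4)^CARD('n) * measure lborel (ball (0::real^'n) 1)"
  have c0: "c0 > 0" unfolding c0_def using content_ball_pos[of 1 "0::real^'n"] by simp
  define C where "C = (if r = 1 then 1 else r + r/(r-1)) * (Cs / c0) powr (1 - 1/r)"
  have "C > 0" using assms Cs c0 by (auto simp: C_def intro!: mult_pos_pos add_pos_pos)
  moreover have "lorentz_norm w r (\<lambda>y. G x y t)
                 \<le> ennreal (C * t powr (- ((real CARD('n) + \<alpha>) / 2) * (1 - 1 / r)))"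
    if "(\<exists>i1. 0 \<le> \<alpha> \<and> \<alpha> < 1 \<and> w = weightA i1 \<alpha>) \<or> (0 \<le> \<alpha> \<and> \<alpha> < real CARD('n) \<and> w = weightB \<alpha>)"
      and "heat_kernel_hyps w cs Cs G" and "t > 0"
    for w :: "real^'n \<Rightarrow> real" and G x t
    using lorentz_norm_heat_kernel_le[OF assms that(1,2) cs Cs that(3)] by (simp add: C_def c0_def)
  ultimately show "\<exists>C>0. \<forall>(w :: real^'n \<Rightarrow> real) (G :: real^'n \<Rightarrow> real^'n \<Rightarrow> real \<Rightarrow> real).
       ((\<exists>i1. 0 \<le> \<alpha> \<and> \<alpha> < 1 \<and> w = weightA i1 \<alpha>) \<or>
        (0 \<le> \<alpha> \<and> \<alpha> < real CARD('n) \<and> w = weightB \<alpha>)) \<longrightarrow>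
       heat_kernel_hyps w cs Cs G \<longrightarrow>
       (\<forall>x t. t > 0 \<longrightarrow>
          lorentz_norm w r (\<lambda>y. G x y t)
            \<le> ennreal (C * t powr (- ((real CARD('n) + \<alpha>) / 2) * (1 - 1 / r))))"
    by blast
qed

end
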